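(* Fix $\tau\in\mathbb N$ and assume $p_{A,\hat Y}(a,y)>0$ for all $(a,y)\in\mathcal A\times\mathcal Y$. Let $q^*$ be the partition returned by the greedy procedure on $n$ i.i.d. samples of $(A,\hat Y)$. Then $\hat u^{(q^* )}_{\mathrm{ind}}$ is a consistent estimator of $u^*$: for every $\epsilon>0$, $\Pr\big(|\hat u^{(q^* )}_{\mathrm{ind}}-u^*|>\epsilon\big)\to0$ as $n\to\infty$.
   Context: Let $\hat Y$ take values in a finite set $\mathcal Y$ and $A=(A_1,\dots,A_d)$, $A_k$ taking values in a finite set $\mathcal A_k$, $\mathcal A=\prod_k\mathcal A_k$. Write $p_{\hat Y\mid A}(y\mid a)=\Pr(\hat Y=y\mid A=a)$ and $u^*=\sup_{y\in\mathcal Y}\sup_{(a,a')\in\mathcal A^2}\big|\log\big(p_{\hat Y\mid A}(y\mid a)/p_{\hat Y\mid A}(y\mid a')\big)\big|$. For $t\subseteq[d]=\{1,\dots,d\}$ let $A_t=(A_k)_{k\in t}$ with values in $\mathcal A_t=\prod_{k\in t}\mathcal A_k$. Given i.i.d. samples $(A^{(i)},\hat Y^{(i)})_{i=1}^n$, let $N_{a_t,y}=\#\{i:A^{(i)}_t=a_t,\hat Y^{(i)}=y\}$, $N_{a_t}=\sum_y N_{a_t,y}$, and $\hat p(y\mid a_t)=N_{a_t,y}/N_{a_t}$. A partition $q$ of $[d]$ is feasible if $N_{a_t,y}>\tau$ for all $t\in q$, $a_t\in\mathcal A_t$, $y\in\mathcal Y$. For a feasible partition $q$, $\hat u^{(q)}_{\mathrm{ind}}=\sup_{y\in\mathcal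 Y}\sum_{t\in q}\sup_{(a_t,a_t')\in\mathcal A_t^2}\big|\log\big(\hat p(y\mid a_t)/\hat p(y\mid a_t')\big)\big|$. Greedy procedure: if the partition into singletons is not feasible, $q^*$ is the singleton partition and $\hat u^{(q^* )}_{\mathrm{ind}}$ is set to an arbitrary value; otherwise start with $q$ equal to the singleton partition and, as long as some partition obtained from $q$ by merging two distinct blocks $t_1,t_2\in q$ into $t_1\cup t_2$ is feasible, replace $q$ by such a feasible merged partition minimizing $\hat s^*$ (ties broken arbitrarily); when no feasible merge exists, output $q^*=q$. Here $\hat s^*(q)=(\hat\sigma_q^{2/3}+\hat\sigma_{y,q}^{2/3})^{3/2}$ where $\hat\sigma_q$ and $\hat\sigma_{y,q}$ are the standard deviations, under the empirical joint distribution $\hat p$ of $(A,\hat Y)$, of $\log\big(\hat p_A(A)/\prod_{t\in q}\hat p_{A_t}(A_t)\big)$ and $\log\big(\hat p_{A\mid\hat Y}(A\mid\hat Y)/\prod_{t\in q}\hat p_{A_t\mid\hat Y}(A_t\mid\hat Y)\big)$. *)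

theory Defs
  imports "HOL-Probability.Probability"
begin

text \<open>A sample of size n: indices i < n, each S i = (A^(i), Yhat^(i)); attribute vectors
  are functions nat => 'v, restricted to {..<d}.\<close>
type_synonym ('v,'y) sample = "nat \<Rightarrow> ((nat \<Rightarrow> 'v) \<times> 'y)"

definition cnt_ay :: "nat \<Rightarrow> ('v,'y) sample \<Rightarrow> nat set \<Rightarrow> (nat \<Rightarrow> 'v) \<Rightarrow> 'y \<Rightarrow> nat" where
  "cnt_ay n S t a_t y = card {i. i < n \<and> restrict (fst (S i)) t = a_t \<and> snd (S i) = y}"

definition cnt_a :: "nat \<Rightarrow> ('v,'y) sample \<Rightarrow> nat set \<Rightarrow> (nat \<Rightarrow> 'v) \<Rightarrow> nat" where
  "cnt_a n S t a_t = card {i. i < n \<and> restrict (fst (S i)) t = a_t}"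

definition cnt_y :: "nat \<Rightarrow> ('v,'y) sample \<Rightarrow> 'y \<Rightarrow> nat" where
  "cnt_y n S y = card {i. i < n \<and> snd (S i) = y}"

definition phat_cond :: "nat \<Rightarrow> ('v,'y) sample \<Rightarrow> nat set \<Rightarrow> 'y \<Rightarrow> (nat \<Rightarrow> 'v) \<Rightarrow> real" where
  "phat_cond n S t y a_t = real (cnt_ay n S t a_t y) / real (cnt_a n S t a_t)"

definition feasible :: "nat \<Rightarrow> (nat \<Rightarrow> 'v set) \<Rightarrow> nat \<Rightarrow> ('v,'y) sample \<Rightarrow> nat set set \<Rightarrow> bool" where
  "feasible \<tau> Ak n S q \<longleftrightarrow> (\<forall>t\<in>q. \<forall>a_t\<in>PiE t Ak. \<forall>y. cnt_ay n S t a_t y > \<tau>)"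

definition u_ind :: "(nat \<Rightarrow> 'v set) \<Rightarrow> nat \<Rightarrow> ('v,'y) sample \<Rightarrow> nat set set \<Rightarrow> real" where
  "u_ind Ak n S q = Max (range (\<lambda>y. \<Sum>t\<in>q. Max ((\<lambda>(a, a'). \<bar>ln (phat_cond n S t y a / phat_cond n S t y a')\<bar>)
                                           ` (PiE t Ak \<times> PiE t Ak))))"

definition singletons :: "nat \<Rightarrow> nat set set" where
  "singletons d = (\<lambda>k. {k}) ` {..<d}"

definition merges :: "nat set set \<Rightarrow> nat set set set" where
  "merges q = {insert (t1 \<union> t2) (q - {t1, t2}) | t1 t2. t1 \<in> q \<and> t2 \<in> q \<and> t1 \<noteq> t2}"

definition emp_mean :: "nat \<Rightarrow> ('v,'y) sample \<Rightarrow> ((nat \<Rightarrow> 'v) \<times> 'y \<Rightarrow> real) \<Rightarrow> real" where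
  "emp_mean n S f = (\<Sum>i<n. f (S i)) / real n"

definition emp_sd :: "nat \<Rightarrow> ('v,'y) sample \<Rightarrow> ((nat \<Rightarrow> 'v) \<times> 'y \<Rightarrow> real) \<Rightarrow> real" where
  "emp_sd n S f = sqrt (emp_mean n S (\<lambda>z. (f z - emp_mean n S f)\<^sup>2))"

definition logratio_A :: "nat \<Rightarrow> nat \<Rightarrow> ('v,'y) sample \<Rightarrow> nat set set \<Rightarrow> (nat \<Rightarrow> 'v) \<times> 'y \<Rightarrow> real" where
  "logratio_A d n S q z =
     ln ((real (cnt_a n S {..<d} (restrict (fst z) {..<d})) / real n)
         / (\<Prod>t\<in>q. real (cnt_a n S t (restrict (fst z) t)) / real n))"

definition logratio_AY :: "nat \<Rightarrow> nat \<Rightarrow> ('v,'y) sample \<Rightarrow> nat set set \<Rightarrow> (nat \<Rightarrow> 'v) \<times> 'y \<Rightarrow> real" where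
  "logratio_AY d n S q z =
     ln ((real (cnt_ay n S {..<d} (restrict (fst z) {..<d}) (snd z)) / real (cnt_y n S (snd z)))
         / (\<Prod>t\<in>q. real (cnt_ay n S t (restrict (fst z) t) (snd z)) / real (cnt_y n S (snd z))))"

definition s_hat :: "nat \<Rightarrow> nat \<Rightarrow> ('v,'y) sample \<Rightarrow> nat set set \<Rightarrow> real" where
  "s_hat d n S q = (emp_sd n S (logratio_A d n S q) powr (2/3)
                    + emp_sd n S (logratio_AY d n S q) powr (2/3)) powr (3/2)"

definition greedy_step :: "nat \<Rightarrow> (nat \<Rightarrow> 'v set) \<Rightarrow> nat \<Rightarrow> nat \<Rightarrow> ('v,'y) sample \<Rightarrow> nat set set \<Rightarrow> nat set set \<Rightarrow> bool" where
  "greedy_step \<tau> Ak d n S q q' \<longleftrightarrow>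
     q' \<in> merges q \<and> feasible \<tau> Ak n S q' \<and>
     (\<forall>q''\<in>merges q. feasible \<tau> Ak n S q'' \<longrightarrow> s_hat d n S q' \<le> s_hat d n S q'')"

text \<open>q is a possible output of the greedy procedure (under some tie-breaking)\<close>
definition greedy_output :: "nat \<Rightarrow> (nat \<Rightarrow> 'v set) \<Rightarrow> nat \<Rightarrow> nat \<Rightarrow> ('v,'y) sample \<Rightarrow> nat set set \<Rightarrow> bool" where
  "greedy_output \<tau> Ak d n S q \<longleftrightarrow>
     (if feasible \<tau> Ak n S (singletons d)
      then (greedy_step \<tau> Ak d n S)\<^sup>*\<^sup>* (singletons d) q \<and> \<not> (\<exists>q'\<in>merges q. feasible \<tau> Ak n S q')
      else q = singletons d)"

definition cond_true :: "((nat \<Rightarrow> 'v) \<times> 'y::finite) pmf \<Rightarrow> 'y \<Rightarrow> (nat \<Rightarrow> 'v) \<Rightarrow> real" where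
  "cond_true P y a = pmf P (a, y) / (\<Sum>y'\<in>UNIV. pmf P (a, y'))"

definition ustar :: "(nat \<Rightarrow> 'v set) \<Rightarrow> nat \<Rightarrow> ((nat \<Rightarrow> 'v) \<times> 'y::finite) pmf \<Rightarrow> real" where
  "ustar Ak d P = Max ((\<lambda>(y, a, a'). \<bar>ln (cond_true P y a / cond_true P y a')\<bar>)
                       ` (UNIV \<times> PiE {..<d} Ak \<times> PiE {..<d} Ak))"

end

theory Submission
  imports Defs "HOL-Real_Asymp.Real_Asymp"
begin

text \<open>
  Every cell (a, y) has positive probability, so by Hoeffding's inequality, with probability
  tending to one, every cell count exceeds \<open>\<tau>\<close> and every empirical cell frequency is within a
  factor \<open>exp (\<plusminus>\<eta>)\<close> of the cell probability. On that event every partition is feasible, so the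
  greedy procedure merges all attributes into the single block \<open>[d]\<close>, and its estimator is the
  plug-in estimator of \<open>u*\<close>. Normalising over y at most doubles the relative error of the
  conditionals, and a log-ratio of two conditionals then moves by at most \<open>4 \<eta>\<close>; take
  \<open>\<eta> = \<epsilon> / 8\<close>.
\<close>

section \<open>Multiplicative perturbation of log-ratios\<close>

lemma abs_ln_le_iff:
  fixes x :: real
  assumes "x > 0"
  shows "\<bar>ln x\<bar> \<le> \<eta> \<longleftrightarrow> exp (-\<eta>) \<le> x \<and> x \<le> exp \<eta>"
  using assms ln_le_cancel_iff[of x "exp \<eta>"] ln_ge_iff[of x "-\<eta>"] by auto

lemma abs_ln_divide_le_if_close:
  fixes r p \<eta> :: real
  assumes "p > 0" "\<bar>r - p\<bar> < p * (1 - exp (-\<eta>))"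
  shows "p * exp (-\<eta>) < r" "\<bar>ln (r / p)\<bar> \<le> \<eta>"
proof -
  show lower: "p * exp (-\<eta>) < r"
    using assms(2) by (simp add: algebra_simps)
  have "r < p * (2 - exp (-\<eta>))"
    using assms(2) by (auto simp: abs_less_iff algebra_simps)
  also have "\<dots> \<le> p * exp \<eta>"
    using assms(1) exp_ge_add_one_self[of \<eta>] exp_ge_add_one_self[of "-\<eta>"]
    by (intro mult_left_mono) linarith+
  finally have "r \<le> p * exp \<eta>" by simp
  moreover have "r > 0"
    using lower mult_pos_pos[OF assms(1) exp_gt_zero[of "-\<eta>"]] by linarith
  ultimately show "\<bar>ln (r / p)\<bar> \<le> \<eta>"
    using lower assms(1) by (subst abs_ln_le_iff) (auto simp: field_simps)
qed

lemma abs_diff_abs_ln_divide_le: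
  fixes u u' v v' e :: real
  assumes "0 < u" "0 < u'" "0 < v" "0 < v'" "\<bar>ln (u / v)\<bar> \<le> e" "\<bar>ln (u' / v')\<bar> \<le> e"
  shows "\<bar>\<bar>ln (u / u')\<bar> - \<bar>ln (v / v')\<bar>\<bar> \<le> 2 * e"
  using assms by (simp add: ln_divide_pos)

lemma Max_image_diff_le:
  fixes F G :: "'a \<Rightarrow> real"
  assumes "finite A" "A \<noteq> {}" "\<And>x. x \<in> A \<Longrightarrow> \<bar>F x - G x\<bar> \<le> e"
  shows "\<bar>Max (F ` A) - Max (G ` A)\<bar> \<le> e"
proof -
  have "Max (F ` A) \<in> F ` A" "Max (G ` A) \<in> G ` A"
    using assms(1,2) by (auto intro!: Max_in)
  then obtain x y where x: "x \<in> A" "Max (F ` A) = F x" and y: "y \<in> A" "Max (G ` A) = G y"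
    by auto
  have "G x \<le> G y" "F y \<le> F x"
    using x y assms(1) by (metis Max_ge finite_imageI image_eqI)+
  with assms(3)[OF x(1)] assms(3)[OF y(1)] show ?thesis
    unfolding x y by linarith
qed

definition cond_weight :: "('a \<times> 'y::finite \<Rightarrow> real) \<Rightarrow> 'y \<Rightarrow> 'a \<Rightarrow> real" where
  "cond_weight f y a = f (a, y) / (\<Sum>y'\<in>UNIV. f (a, y'))"

definition max_log_ratio :: "('y::finite \<Rightarrow> 'a \<Rightarrow> real) \<Rightarrow> 'a set \<Rightarrow> real" where
  "max_log_ratio c X = Max ((\<lambda>(y, a, a'). \<bar>ln (c y a / c y a')\<bar>) ` (UNIV \<times> X \<times> X))"

lemma cond_weight_pos:
  assumes "\<And>y. f (a, y) > 0"
  shows "cond_weight f y a > 0"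
  unfolding cond_weight_def using assms by (intro divide_pos_pos sum_pos) auto

lemma cond_weight_divide:
  assumes "c \<noteq> 0"
  shows "cond_weight (\<lambda>z. f z / c) = cond_weight f"
  using assms by (intro ext) (simp add: cond_weight_def flip: sum_divide_distrib)

lemma abs_ln_cond_weight_ratio_le:
  assumes pos: "\<And>y. f (a, y) > 0 \<and> p (a, y) > 0"
    and close: "\<And>y. \<bar>ln (f (a, y) / p (a, y))\<bar> \<le> \<eta>"
  shows "\<bar>ln (cond_weight f y a / cond_weight p y a)\<bar> \<le> 2 * \<eta>"
proof -
  define F where "F = (\<Sum>y'\<in>UNIV. f (a, y'))"
  define Q where "Q = (\<Sum>y'\<in>UNIV. p (a, y'))"
  have bounds: "exp (-\<eta>) * p (a, y') \<le> f (a, y') \<and> f (a, y') \<le> exp \<eta> * p (a, y')" for y'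
    using close[of y'] pos[of y'] by (subst (asm) abs_ln_le_iff) (auto simp: field_simps)
  have "F > 0" "Q > 0"
    unfolding F_def Q_def using pos by (auto intro: sum_pos)
  moreover have "exp (-\<eta>) * Q \<le> F" "F \<le> exp \<eta> * Q"
    unfolding F_def Q_def sum_distrib_left using bounds by (auto intro: sum_mono)
  ultimately have sums: "\<bar>ln (F / Q)\<bar> \<le> \<eta>"
    by (subst abs_ln_le_iff) (auto simp: field_simps)
  have "cond_weight f y a / cond_weight p y a = (f (a, y) / p (a, y)) / (F / Q)"
    unfolding cond_weight_def F_def Q_def by (simp add: field_simps)
  also have "ln \<dots> = ln (f (a, y) / p (a, y)) - ln (F / Q)"
    using pos[of y] \<open>F > 0\<close> \<open>Q > 0\<close> by (intro ln_divide_pos) auto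
  finally show ?thesis
    using close[of y] sums by linarith
qed

lemma max_log_ratio_perturb:
  fixes c c' :: "'y::finite \<Rightarrow> 'a \<Rightarrow> real"
  assumes "finite X" "X \<noteq> {}"
    and pos: "\<And>y a. a \<in> X \<Longrightarrow> c y a > 0 \<and> c' y a > 0"
    and close: "\<And>y a. a \<in> X \<Longrightarrow> \<bar>ln (c y a / c' y a)\<bar> \<le> e"
  shows "\<bar>max_log_ratio c X - max_log_ratio c' X\<bar> \<le> 2 * e"
  unfolding max_log_ratio_def
proof (rule Max_image_diff_le)
  show "finite (UNIV \<times> X \<times> X :: ('y \<times> 'a \<times> 'a) set)" "UNIV \<times> X \<times> X \<noteq> {}"
    using assms(1,2) by (auto intro!: finite_cartesian_product)
next
  fix w :: "'y \<times> 'a \<times> 'a"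
  assume "w \<in> UNIV \<times> X \<times> X"
  then obtain y a a' where "w = (y, a, a')" "a \<in> X" "a' \<in> X" by auto
  then show "\<bar>(\<lambda>(y, a, a'). \<bar>ln (c y a / c y a')\<bar>) w - (\<lambda>(y, a, a'). \<bar>ln (c' y a / c' y a')\<bar>) w\<bar> \<le> 2 * e"
    using pos close by (auto intro!: abs_diff_abs_ln_divide_le)
qed

lemma max_log_ratio_nested:
  assumes "finite X" "X \<noteq> {}"
  shows "max_log_ratio c X = Max (range (\<lambda>y. Max ((\<lambda>(a, a'). \<bar>ln (c y a / c y a')\<bar>) ` (X \<times> X))))"
    (is "_ = Max (range (\<lambda>y. Max (?H y ` (X \<times> X))))")
proof -
  have fin: "finite (?H y ` (X \<times> X))" "?H y ` (X \<times> X) \<noteq> {}" for y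
    using assms by auto
  have "(\<lambda>(y, a, a'). \<bar>ln (c y a / c y a')\<bar>) ` (UNIV \<times> X \<times> X) = (\<Union>y. ?H y ` (X \<times> X))"
    by (fastforce intro: image_eqI[where x = "(_, _, _)"])
  also have "Max \<dots> = Max (range (\<lambda>y. Max (?H y ` (X \<times> X))))"
  proof (rule antisym)
    show "Max (\<Union>y. ?H y ` (X \<times> X)) \<le> Max (range (\<lambda>y. Max (?H y ` (X \<times> X))))"
    proof (rule Max.boundedI)
      fix v assume "v \<in> (\<Union>y. ?H y ` (X \<times> X))"
      then obtain y where "v \<in> ?H y ` (X \<times> X)" by blast
      then have "v \<le> Max (?H y ` (X \<times> X))"
        using fin by simp
      also have "\<dots> \<le> Max (range (\<lambda>y. Max (?H y ` (X \<times> X))))"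
        by simp
      finally show "v \<le> Max (range (\<lambda>y. Max (?H y ` (X \<times> X))))" .
    qed (use fin in auto)
    show "Max (range (\<lambda>y. Max (?H y ` (X \<times> X)))) \<le> Max (\<Union>y. ?H y ` (X \<times> X))"
    proof (rule Max.boundedI)
      fix v assume "v \<in> range (\<lambda>y. Max (?H y ` (X \<times> X)))"
      then obtain y where v: "v = Max (?H y ` (X \<times> X))" by blast
      have "?H y ` (X \<times> X) \<subseteq> (\<Union>y. ?H y ` (X \<times> X))" by blast
      then show "v \<le> Max (\<Union>y. ?H y ` (X \<times> X))"
        unfolding v using fin by (intro Max_mono) auto
    qed auto
  qed
  finally show ?thesis
    unfolding max_log_ratio_def .
qed

section \<open>Cell counts of an i.i.d. sample\<close>

definition cell_count :: "nat \<Rightarrow> (nat \<Rightarrow> 'a) \<Rightarrow> 'a \<Rightarrow> nat" where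
  "cell_count n S z = card {i. i < n \<and> S i = z}"

lemma cell_count_le: "cell_count n S z \<le> n"
  unfolding cell_count_def by (rule card_mono[of "{..<n}", simplified]) auto

lemma map_pmf_mem_eq_bernoulli_pmf:
  "map_pmf (\<lambda>w. w \<in> A) P = bernoulli_pmf (measure_pmf.prob P A)"
proof (rule pmf_eqI)
  fix b :: bool
  have "measure_pmf.prob P {w. w \<notin> A} = 1 - measure_pmf.prob P A"
    using measure_pmf.prob_compl[of A P] by (simp add: set_diff_eq)
  then show "pmf (map_pmf (\<lambda>w. w \<in> A) P) b = pmf (bernoulli_pmf (measure_pmf.prob P A)) b"
    by (cases b) (simp_all add: pmf_map vimage_def)
qed

lemma cell_count_binomial:
  "map_pmf (\<lambda>S. cell_count n S z) (Pi_pmf {..<n} dflt (\<lambda>_. P)) = binomial_pmf n (pmf P z)"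
proof -
  have "binomial_pmf n (pmf P z)
      = map_pmf (\<lambda>f. card {i\<in>{..<n}. f i}) (Pi_pmf {..<n} (dflt = z) (\<lambda>_. bernoulli_pmf (pmf P z)))"
    by (rule binomial_pmf_altdef') (auto simp: pmf_le_1)
  also have "bernoulli_pmf (pmf P z) = map_pmf (\<lambda>w. w = z) P"
    using map_pmf_mem_eq_bernoulli_pmf[of "{z}" P] by (simp add: measure_pmf_single)
  also have "Pi_pmf {..<n} (dflt = z) (\<lambda>_. map_pmf (\<lambda>w. w = z) P)
      = map_pmf (\<lambda>S. (\<lambda>w. w = z) \<circ> S) (Pi_pmf {..<n} dflt (\<lambda>_. P))"
    by (rule Pi_pmf_map) auto
  finally show ?thesis
    by (simp add: pmf.map_comp o_def cell_count_def)
qed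

lemma prob_cell_freq_deviation_le:
  assumes "n > 0" "\<delta> \<ge> 0"
  shows "measure_pmf.prob (Pi_pmf {..<n} dflt (\<lambda>_. P))
           {S. \<delta> \<le> \<bar>real (cell_count n S z) / n - pmf P z\<bar>} \<le> 2 * exp (- 2 * real n * \<delta>\<^sup>2)"
proof -
  interpret binomial_distribution n "pmf P z"
    by unfold_locales (auto simp: pmf_le_1)
  have "measure_pmf.prob (Pi_pmf {..<n} dflt (\<lambda>_. P))
          {S. \<delta> \<le> \<bar>real (cell_count n S z) / n - pmf P z\<bar>}
      = measure_pmf.prob (map_pmf (\<lambda>S. cell_count n S z) (Pi_pmf {..<n} dflt (\<lambda>_. P)))
          {x. \<delta> \<le> \<bar>real x / n - pmf P z\<bar>}"
    by (simp add: vimage_def)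
  also have "\<dots> \<le> 2 * exp (- 2 * real n * \<delta>\<^sup>2)"
    using prob_abs_ge'[OF assms] by (simp add: cell_count_binomial)
  finally show ?thesis .
qed

lemma prob_cell_freq_deviation_tendsto_0:
  assumes "\<delta> > 0"
  shows "(\<lambda>n. measure_pmf.prob (Pi_pmf {..<n} dflt (\<lambda>_. P))
           {S. \<delta> \<le> \<bar>real (cell_count n S z) / n - pmf P z\<bar>}) \<longlonglongrightarrow> 0"
proof (rule Lim_null_comparison)
  show "(\<lambda>n. 2 * exp (- 2 * real n * \<delta>\<^sup>2)) \<longlonglongrightarrow> 0"
    using assms by real_asymp
  show "\<forall>\<^sub>F n in sequentially. norm (measure_pmf.prob (Pi_pmf {..<n} dflt (\<lambda>_. P))
           {S. \<delta> \<le> \<bar>real (cell_count n S z) / n - pmf P z\<bar>}) \<le> 2 * exp (- 2 * real n * \<delta>\<^sup>2)"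
    using eventually_gt_at_top[of 0]
    by eventually_elim (use prob_cell_freq_deviation_le[OF _ less_imp_le[OF assms]] in auto)
qed

lemma measure_pmf_prob_le_sum_if_cover:
  assumes "finite Z" "A \<inter> set_pmf M \<subseteq> (\<Union>z\<in>Z. B z)"
  shows "measure_pmf.prob M A \<le> (\<Sum>z\<in>Z. measure_pmf.prob M (B z))"
proof -
  have "measure_pmf.prob M A = measure_pmf.prob M (A \<inter> set_pmf M)"
    by (simp add: measure_Int_set_pmf)
  also have "\<dots> \<le> measure_pmf.prob M (\<Union>z\<in>Z. B z)"
    using assms(2) by (rule measure_pmf.finite_measure_mono) simp
  also have "\<dots> \<le> (\<Sum>z\<in>Z. measure_pmf.prob M (B z))"
    using assms(1) by (rule measure_pmf.finite_measure_subadditive_finite) simp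
  finally show ?thesis .
qed

definition cell_well_sampled :: "nat \<Rightarrow> real \<Rightarrow> 'a pmf \<Rightarrow> nat \<Rightarrow> (nat \<Rightarrow> 'a) \<Rightarrow> 'a \<Rightarrow> bool" where
  "cell_well_sampled \<tau> \<eta> P n S z \<longleftrightarrow>
     \<tau> < cell_count n S z \<and> \<bar>ln (real (cell_count n S z) / n / pmf P z)\<bar> \<le> \<eta>"

lemma prob_cell_not_well_sampled_tendsto_0:
  assumes p: "pmf P z > 0" and \<eta>: "\<eta> > 0"
  shows "(\<lambda>n. measure_pmf.prob (Pi_pmf {..<n} dflt (\<lambda>_. P))
           {S. \<not> cell_well_sampled \<tau> \<eta> P n S z}) \<longlonglongrightarrow> 0"
proof (rule Lim_null_comparison)
  define \<delta> where "\<delta> = pmf P z * (1 - exp (-\<eta>))"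
  have "\<delta> > 0"
    unfolding \<delta>_def using p \<eta> by simp
  then show "(\<lambda>n. measure_pmf.prob (Pi_pmf {..<n} dflt (\<lambda>_. P))
      {S. \<delta> \<le> \<bar>real (cell_count n S z) / n - pmf P z\<bar>}) \<longlonglongrightarrow> 0"
    by (rule prob_cell_freq_deviation_tendsto_0)
  have "\<forall>\<^sub>F n in sequentially. real \<tau> < real n * (pmf P z * exp (-\<eta>))"
    using p by real_asymp
  then show "\<forall>\<^sub>F n in sequentially.
      norm (measure_pmf.prob (Pi_pmf {..<n} dflt (\<lambda>_. P)) {S. \<not> cell_well_sampled \<tau> \<eta> P n S z})
      \<le> measure_pmf.prob (Pi_pmf {..<n} dflt (\<lambda>_. P))
           {S. \<delta> \<le> \<bar>real (cell_count n S z) / n - pmf P z\<bar>}"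
  proof eventually_elim
    case (elim n)
    have "{S. \<not> cell_well_sampled \<tau> \<eta> P n S z}
        \<subseteq> {S. \<delta> \<le> \<bar>real (cell_count n S z) / n - pmf P z\<bar>}"
    proof (rule subsetI, rule ccontr)
      fix S
      assume "S \<notin> {S. \<delta> \<le> \<bar>real (cell_count n S z) / n - pmf P z\<bar>}"
      then have close: "\<bar>real (cell_count n S z) / n - pmf P z\<bar> < pmf P z * (1 - exp (-\<eta>))"
        unfolding \<delta>_def by simp
      note freq = abs_ln_divide_le_if_close[OF p close]
      have "n > 0"
        using freq(1) mult_pos_pos[OF p exp_gt_zero[of "-\<eta>"]] by (cases n) auto
      with freq(1) elim have "\<tau> < cell_count n S z"
        by (simp add: field_simps)
      moreover assume "S \<in> {S. \<not> cell_well_sampled \<tau> \<eta> P n S z}"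
      ultimately show False
        using freq(2) unfolding cell_well_sampled_def by simp
    qed
    then show ?case
      by (simp add: measure_pmf.finite_measure_mono)
  qed
qed

section \<open>The greedy procedure when every partition is feasible\<close>

lemma greedy_steps_partition:
  assumes "(greedy_step \<tau> Ak d n S)\<^sup>*\<^sup>* (singletons d) q"
  shows "(\<forall>t\<in>q. t \<noteq> {} \<and> t \<subseteq> {..<d}) \<and> \<Union>q = {..<d}"
  using assms
proof (induction rule: rtranclp_induct)
  case base
  then show ?case by (auto simp: singletons_def)
next
  case (step q q')
  then obtain t1 t2 where "q' = insert (t1 \<union> t2) (q - {t1, t2})" "t1 \<in> q" "t2 \<in> q"
    unfolding greedy_step_def merges_def by blast
  with step.IH show ?case by blast
qed

lemma greedy_output_all_feasible:
  assumes all_feasible: "\<And>q'. \<forall>t\<in>q'. t \<subseteq> {..<d} \<Longrightarrow> feasible \<tau> Ak n S q'"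
    and "greedy_output \<tau> Ak d n S q"
  shows "q = (if d = 0 then {} else {{..<d}})"
proof -
  have "feasible \<tau> Ak n S (singletons d)"
    by (rule all_feasible) (auto simp: singletons_def)
  with assms(2) have steps: "(greedy_step \<tau> Ak d n S)\<^sup>*\<^sup>* (singletons d) q"
    and final: "\<not> (\<exists>q'\<in>merges q. feasible \<tau> Ak n S q')"
    unfolding greedy_output_def by auto
  note partition = greedy_steps_partition[OF steps]
  have single: "t1 = t2" if "t1 \<in> q" "t2 \<in> q" for t1 t2
  proof (rule ccontr)
    assume "t1 \<noteq> t2"
    then have "insert (t1 \<union> t2) (q - {t1, t2}) \<in> merges q"
      using that unfolding merges_def by blast
    moreover have "feasible \<tau> Ak n S (insert (t1 \<union> t2) (q - {t1, t2}))"
      by (rule all_feasible) (use partition that in blast)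
    ultimately show False using final by blast
  qed
  show ?thesis
  proof (cases "d = 0")
    case False
    then obtain t where "t \<in> q" using partition by auto
    with single have "q = {t}" by blast
    with partition False show ?thesis by auto
  qed (use partition in auto)
qed

lemma feasible_if_cell_counts_exceed:
  fixes S :: "('v, 'y) sample"
  assumes nonempty: "\<forall>k<d. Ak k \<noteq> {}"
    and counts: "\<forall>z\<in>PiE {..<d} Ak \<times> UNIV. \<tau> < cell_count n S z"
    and blocks: "\<forall>t\<in>q. t \<subseteq> {..<d}"
  shows "feasible \<tau> Ak n S q"
  unfolding feasible_def
proof (intro ballI allI)
  fix t a_t y
  assume t: "t \<in> q" and a_t: "a_t \<in> PiE t Ak"
  define a where "a k = (if k \<in> t then a_t k else if k < d then (SOME v. v \<in> Ak k) else undefined)" for k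
  have "a \<in> PiE {..<d} Ak"
    using a_t blocks t nonempty unfolding a_def by (auto simp: PiE_def Pi_def extensional_def some_in_eq)
  then have "\<tau> < cell_count n S (a, y)"
    using counts by simp
  also have "\<dots> \<le> cnt_ay n S t a_t y"
  proof -
    have "restrict a t = a_t"
      using a_t unfolding a_def by (auto simp: PiE_def extensional_def)
    then show ?thesis
      unfolding cell_count_def cnt_ay_def by (intro card_mono) auto
  qed
  finally show "\<tau> < cnt_ay n S t a_t y" .
qed

section \<open>The estimator on a well-sampled sample\<close>

lemma cnt_ay_full_block:
  assumes "\<forall>i<n. fst (S i) \<in> PiE {..<d} Ak" "a \<in> PiE {..<d} Ak"
  shows "cnt_ay n S {..<d} a y = cell_count n S (a, y)"
  unfolding cnt_ay_def cell_count_def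
  by (rule arg_cong[where f = card]) (use assms in \<open>auto simp: prod_eq_iff\<close>)

lemma cnt_a_full_block:
  fixes S :: "('v, 'y::finite) sample"
  assumes "\<forall>i<n. fst (S i) \<in> PiE {..<d} Ak"
  shows "cnt_a n S {..<d} a = (\<Sum>y\<in>UNIV. cell_count n S (a, y))"
proof -
  have "{i. i < n \<and> restrict (fst (S i)) {..<d} = a} = (\<Union>y. {i. i < n \<and> S i = (a, y)})"
    using assms by (auto simp: prod_eq_iff)
  moreover have "card (\<Union>y. {i. i < n \<and> S i = (a, y)}) = (\<Sum>y\<in>UNIV. card {i. i < n \<and> S i = (a, y)})"
    by (rule card_UN_disjoint) auto
  ultimately show ?thesis
    unfolding cnt_a_def cell_count_def by simp
qed

lemma u_ind_full_block:
  fixes S :: "('v, 'y::finite) sample"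
  assumes "\<forall>i<n. fst (S i) \<in> PiE {..<d} Ak" "finite (PiE {..<d} Ak)" "PiE {..<d} Ak \<noteq> {}"
  shows "u_ind Ak n S {{..<d}} = max_log_ratio (cond_weight (\<lambda>z. real (cell_count n S z))) (PiE {..<d} Ak)"
proof -
  have "phat_cond n S {..<d} y a = cond_weight (\<lambda>z. real (cell_count n S z)) y a"
    if "a \<in> PiE {..<d} Ak" for a y
    using that assms(1)
    by (simp add: phat_cond_def cond_weight_def cnt_ay_full_block cnt_a_full_block)
  then show ?thesis
    unfolding u_ind_def max_log_ratio_nested[OF assms(2,3)]
    by (auto intro!: arg_cong[where f = Max] image_cong)
qed

lemma u_ind_full_block_close_ustar:
  fixes P :: "((nat \<Rightarrow> 'v) \<times> 'y::finite) pmf" and S :: "('v, 'y) sample"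
  assumes fin: "\<forall>k<d. finite (Ak k)" and setP: "set_pmf P = PiE {..<d} Ak \<times> UNIV"
    and sample: "\<forall>i<n. S i \<in> set_pmf P"
    and good: "\<forall>z\<in>set_pmf P. cell_well_sampled \<tau> \<eta> P n S z"
  shows "\<bar>u_ind Ak n S {{..<d}} - ustar Ak d P\<bar> \<le> 4 * \<eta>"
proof -
  define X where "X = PiE {..<d} Ak"
  define f where "f z = real (cell_count n S z) / n" for z
  have X: "finite X" "X \<noteq> {}"
    unfolding X_def using fin setP set_pmf_not_empty[of P] by (auto intro: finite_PiE)
  obtain z0 where "z0 \<in> set_pmf P"
    using set_pmf_not_empty[of P] by blast
  with good cell_count_le[of n S z0] have "n > 0"
    unfolding cell_well_sampled_def by fastforce
  have pos: "f z > 0 \<and> pmf P z > 0" if "z \<in> set_pmf P" for z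
    using good that \<open>n > 0\<close> unfolding f_def cell_well_sampled_def by (auto simp: pmf_positive)
  have "\<forall>i<n. fst (S i) \<in> X"
    using sample setP unfolding X_def by (auto simp: mem_Times_iff)
  then have "u_ind Ak n S {{..<d}} = max_log_ratio (cond_weight f) X"
    using X \<open>n > 0\<close> unfolding X_def f_def by (simp add: u_ind_full_block cond_weight_divide)
  moreover have "ustar Ak d P = max_log_ratio (cond_weight (pmf P)) X"
    unfolding ustar_def max_log_ratio_def cond_true_def cond_weight_def X_def ..
  moreover have "\<bar>max_log_ratio (cond_weight f) X - max_log_ratio (cond_weight (pmf P)) X\<bar> \<le> 2 * (2 * \<eta>)"
  proof (rule max_log_ratio_perturb[OF X])
    fix y and a assume "a \<in> X"
    then have "(a, y') \<in> set_pmf P" for y'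
      using setP unfolding X_def by simp
    with pos good show "cond_weight f y a > 0 \<and> cond_weight (pmf P) y a > 0"
      and "\<bar>ln (cond_weight f y a / cond_weight (pmf P) y a)\<bar> \<le> 2 * \<eta>"
      by (auto intro!: cond_weight_pos abs_ln_cond_weight_ratio_le simp: f_def cell_well_sampled_def)
  qed
  ultimately show ?thesis
    by simp
qed

lemma est_close_ustar_if_cells_well_sampled:
  fixes P :: "((nat \<Rightarrow> 'v) \<times> 'y::finite) pmf" and est :: "nat \<Rightarrow> ('v, 'y) sample \<Rightarrow> real"
  assumes fin: "\<forall>k<d. finite (Ak k)" and setP: "set_pmf P = PiE {..<d} Ak \<times> UNIV"
    and est_greedy: "\<forall>n S. feasible \<tau> Ak n S (singletons d) \<longrightarrow>
               (\<exists>q. greedy_output \<tau> Ak d n S q \<and> est n S = u_ind Ak n S q)"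
    and sample: "\<forall>i<n. S i \<in> set_pmf P"
    and good: "\<forall>z\<in>set_pmf P. cell_well_sampled \<tau> \<eta> P n S z"
  shows "\<bar>est n S - ustar Ak d P\<bar> \<le> 4 * \<eta>"
proof -
  have "\<forall>k<d. Ak k \<noteq> {}"
    using setP set_pmf_not_empty[of P] by (auto simp: PiE_eq_empty_iff)
  moreover have "\<forall>z\<in>PiE {..<d} Ak \<times> UNIV. \<tau> < cell_count n S z"
    using good setP unfolding cell_well_sampled_def by simp
  ultimately have all_feasible: "feasible \<tau> Ak n S q'" if "\<forall>t\<in>q'. t \<subseteq> {..<d}" for q'
    using feasible_if_cell_counts_exceed that by blast
  then have "feasible \<tau> Ak n S (singletons d)"
    by (auto simp: singletons_def)
  with est_greedy obtain q where q: "greedy_output \<tau> Ak d n S q" "est n S = u_ind Ak n S q"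
    by blast
  note q_eq = greedy_output_all_feasible[OF all_feasible q(1)]
  have "u_ind Ak n S q = u_ind Ak n S {{..<d}}"
  proof (cases "d = 0")
    case True
    \<comment> \<open>then q is the empty partition, while the single block \<open>{..<0}\<close> only contributes \<open>ln (x / x) = 0\<close>\<close>
    have "\<bar>ln (x / x)\<bar> = 0" for x :: real
      by (cases "x = 0") auto
    with True q_eq show ?thesis
      by (simp add: u_ind_def del: divide_self_if)
  qed (use q_eq in simp)
  with q(2) u_ind_full_block_close_ustar[OF fin setP sample good] show ?thesis
    by simp
qed

theorem theorem3:
  fixes d \<tau> :: nat and Ak :: "nat \<Rightarrow> 'v set" and P :: "((nat \<Rightarrow> 'v) \<times> 'y::finite) pmf"
    and est :: "nat \<Rightarrow> ('v,'y) sample \<Rightarrow> real" and \<epsilon> :: real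
  assumes "\<forall>k<d. finite (Ak k)"
    and "set_pmf P = PiE {..<d} Ak \<times> UNIV"
    and "\<forall>n S. feasible \<tau> Ak n S (singletons d) \<longrightarrow>
               (\<exists>q. greedy_output \<tau> Ak d n S q \<and> est n S = u_ind Ak n S q)"
    and "\<epsilon> > 0"
  shows "(\<lambda>n. measure_pmf.prob (Pi_pmf {..<n} undefined (\<lambda>_. P))
                 {S. \<bar>est n S - ustar Ak d P\<bar> > \<epsilon>}) \<longlonglongrightarrow> 0"
proof -
  define M where "M n = Pi_pmf {..<n} undefined (\<lambda>_. P)" for n :: nat
  define bad where "bad n z = {S. \<not> cell_well_sampled \<tau> (\<epsilon> / 8) P n S z}" for n z
  have finite_support: "finite (set_pmf P)"
    using assms(1,2) by (auto intro!: finite_PiE)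
  have "{S. \<bar>est n S - ustar Ak d P\<bar> > \<epsilon>} \<inter> set_pmf (M n) \<subseteq> (\<Union>z\<in>set_pmf P. bad n z)" for n
  proof
    fix S assume S: "S \<in> {S. \<bar>est n S - ustar Ak d P\<bar> > \<epsilon>} \<inter> set_pmf (M n)"
    then have "\<forall>i<n. S i \<in> set_pmf P"
      by (auto simp: M_def set_Pi_pmf PiE_dflt_def)
    moreover have "\<not> \<bar>est n S - ustar Ak d P\<bar> \<le> 4 * (\<epsilon> / 8)"
      using S assms(4) by auto
    ultimately show "S \<in> (\<Union>z\<in>set_pmf P. bad n z)"
      using est_close_ustar_if_cells_well_sampled[OF assms(1-3) \<open>\<forall>i<n. S i \<in> set_pmf P\<close>, of "\<epsilon> / 8"]
      unfolding bad_def by auto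
  qed
  then have bound: "measure_pmf.prob (M n) {S. \<bar>est n S - ustar Ak d P\<bar> > \<epsilon>}
      \<le> (\<Sum>z\<in>set_pmf P. measure_pmf.prob (M n) (bad n z))" for n
    by (rule measure_pmf_prob_le_sum_if_cover[OF finite_support])
  have "(\<lambda>n. \<Sum>z\<in>set_pmf P. measure_pmf.prob (M n) (bad n z)) \<longlonglongrightarrow> 0"
    using assms(4) unfolding M_def bad_def
    by (intro tendsto_null_sum prob_cell_not_well_sampled_tendsto_0) (auto simp: pmf_positive)
  then show ?thesis
    by (rule Lim_null_comparison[OF always_eventually, rotated]) (use bound in \<open>simp add: M_def\<close>)
qed

end
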